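(* Suppose Assumptions A1 and A2 hold. Then for any integers $n_1\ge n_2\ge0$, the delay $\tau_{n_1}$ is independent of the channel inputs $u(n_1)$ and $u(n_2)$.
   Context: Setting. Fix $\bar\tau\ge1$ and $\mathcal{D}=\{0,\dots,\bar\tau\}$. A networked feedback system has a SISO discrete-time LTI plant $P$ with strictly proper transfer function and a SISO discrete-time LTI controller $K$ with proper transfer function. Both are relaxed (at rest) at time $0$, and all signals are zero at negative times. The plant input is $v(k)+u_d(k)$, where $v$ is the external input. The plant output is $y$, and the controller output $u=Ky$ is the channel input. The receiver output is $$u_d(k)=\sum_{i=0}^{\bar\tau}\alpha_i\delta(\tau_{k-i}-i)u(k-i),$$ with fixed real weights $\alpha_i$ and Kronecker delta $\delta$. Assumptions. - A1: $\{\tau_k\}_{k\ge0}$ is i.i.d. on $\mathcal{D}$ with $\Pr\{\tau_k=i\}=p_i$, $\sum_ip_i=1$. - A2: the input sequence $\{v(k)\}$ is independent of $\{\tau_k\}$. *)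

theory Defs
  imports "HOL-Probability.Probability" "HOL-Computational_Algebra.Polynomial_FPS"
begin

text \<open>A relaxed SISO discrete-time LTI system is described by its impulse response
  h (h k = k-th Markov parameter). Its transfer function H(z) = sum_k h k z^(-k) is a
  proper rational function iff the causal series sum_k h k w^k (w = 1/z) is a rational
  power series p(w)/q(w) with q(0) nonzero.\<close>

definition proper_tf :: "(nat \<Rightarrow> real) \<Rightarrow> bool" where
  "proper_tf h \<longleftrightarrow>
     (\<exists>p q :: real poly. coeff q 0 \<noteq> 0 \<and> Abs_fps h * fps_of_poly q = fps_of_poly p)"

text \<open>Strictly proper: proper and zero direct feedthrough (H(infinity) = h 0 = 0).\<close>
definition strictly_proper_tf :: "(nat \<Rightarrow> real) \<Rightarrow> bool" where
  "strictly_proper_tf h \<longleftrightarrow> proper_tf h \<and> h 0 = 0"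

definition lti_response :: "(nat \<Rightarrow> real) \<Rightarrow> (nat \<Rightarrow> real) \<Rightarrow> nat \<Rightarrow> real" where
  "lti_response h x k = (\<Sum>j\<le>k. h j * x (k - j))"

definition receiver_output ::
  "nat \<Rightarrow> (nat \<Rightarrow> real) \<Rightarrow> (nat \<Rightarrow> nat) \<Rightarrow> (nat \<Rightarrow> real) \<Rightarrow> nat \<Rightarrow> real" where
  "receiver_output taubar alpha tau u k =
     (\<Sum>i\<in>{0..taubar}. if i \<le> k then alpha i * (if tau (k - i) = i then 1 else 0) * u (k - i) else 0)"

end

theory Submission
  imports Defs
begin

text \<open>Because the plant is strictly proper, u(k) depends on the receiver output only up to
  time k - 1, hence, by induction on k, only on the external input v and on the delays
  \<tau>(j) for j < k. For k \<le> n1 it is therefore measurable with respect to the \<sigma>-algebra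
  generated by v and the delays before n1. That \<sigma>-algebra is independent of \<tau>(n1): on
  its generating events b \<inter> c, with b determined by v and c by the past delays, A2 gives
  P(a \<inter> b \<inter> c) = P(b) P(a \<inter> c) and A1 gives P(a \<inter> c) = P(a) P(c).\<close>

lemma (in prob_space) indep_set_mono:
  assumes "indep_set A B" "A' \<subseteq> A" "B' \<subseteq> B"
  shows "indep_set A' B'"
  using assms unfolding indep_sets2_eq by blast

lemma sets_vimage_algebra_comp_subset:
  assumes "f \<in> X \<rightarrow> space N" "g \<in> measurable N K"
  shows "sets (vimage_algebra X (\<lambda>x. g (f x)) K) \<subseteq> sets (vimage_algebra X f N)"
proof -
  have "(\<lambda>x. g (f x)) \<in> measurable (vimage_algebra X f N) K"
    using measurable_comp[OF measurable_vimage_algebra1[OF assms(1)] assms(2)] by (simp add: comp_def)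
  then show ?thesis
    by (intro sets_image_in_sets) simp_all
qed

lemma measurable_sigma_component:
  assumes "F \<in> X \<rightarrow> space (PiM I M)" "sets (vimage_algebra X F (PiM I M)) \<subseteq> G" "G \<subseteq> Pow X"
    and "k \<in> I"
  shows "(\<lambda>x. F x k) \<in> measurable (sigma X G) (M k)"
proof -
  have "F \<in> measurable (sigma X G) (PiM I M)"
    using assms(1-3) by (auto intro!: measurableI sigma_sets.Basic dest: in_vimage_algebra)
  then show ?thesis
    using measurable_component_singleton[OF \<open>k \<in> I\<close>] by (rule measurable_compose)
qed

lemma (in prob_space) indep_set_component_restrict:
  assumes "indep_vars M' X I" "i \<in> I" "K \<subseteq> I" "i \<notin> K"
  shows "indep_set (sets (vimage_algebra (space M) (X i) (M' i)))
           (sets (vimage_algebra (space M) (\<lambda>\<omega>. restrict (\<lambda>j. X j \<omega>) K) (PiM K M')))"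
proof -
  have "X i \<in> measurable M (M' i)"
    using assms(1,2) by (simp add: indep_vars_def)
  then have "(\<lambda>\<omega>. restrict (\<lambda>j. X j \<omega>) {i}) \<in> space M \<rightarrow> space (PiM {i} M')"
    by (auto simp: space_PiM split: if_splits dest: measurable_space)
  from sets_vimage_algebra_comp_subset[OF this, of "\<lambda>f. f i" "M' i"]
  have X_i: "sets (vimage_algebra (space M) (X i) (M' i))
      \<subseteq> sets (vimage_algebra (space M) (\<lambda>\<omega>. restrict (\<lambda>j. X j \<omega>) {i}) (PiM {i} M'))"
    by (simp add: measurable_component_singleton)
  have "indep_var (PiM {i} M') (\<lambda>\<omega>. restrict (\<lambda>j. X j \<omega>) {i}) (PiM K M') (\<lambda>\<omega>. restrict (\<lambda>j. X j \<omega>) K)"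
    using indep_var_restrict[OF assms(1), of "{i}" K] assms(2-4) by auto
  then have "indep_set (sets (vimage_algebra (space M) (\<lambda>\<omega>. restrict (\<lambda>j. X j \<omega>) {i}) (PiM {i} M')))
      (sets (vimage_algebra (space M) (\<lambda>\<omega>. restrict (\<lambda>j. X j \<omega>) K) (PiM K M')))"
    by (simp add: indep_var_eq sets_vimage_algebra)
  then show ?thesis
    by (rule indep_set_mono[OF _ X_i]) simp
qed

lemma (in prob_space) indep_set_sigma_Un:
  assumes BD: "indep_set B D" and AC: "indep_set A C"
    and "A \<subseteq> D" "C \<subseteq> D" "Int_stable A" "Int_stable B" "Int_stable C" "Int_stable D"
    and "space M \<in> B" "space M \<in> C"
  shows "indep_set A (sigma_sets (space M) (B \<union> C))"
proof -
  define G where "G = {b \<inter> c | b c. b \<in> B \<and> c \<in> C}"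
  have D_events: "D \<subseteq> events" and B_events: "B \<subseteq> events"
    using BD by (auto dest: indep_setD_ev1 indep_setD_ev2)
  have "indep_set A G"
    unfolding indep_sets2_eq
  proof (intro conjI ballI)
    show "A \<subseteq> events" "G \<subseteq> events"
      using B_events D_events \<open>A \<subseteq> D\<close> \<open>C \<subseteq> D\<close> unfolding G_def by (auto intro!: sets.Int)
    fix a g assume "a \<in> A" "g \<in> G"
    then obtain b c where g: "g = b \<inter> c" and "b \<in> B" "c \<in> C"
      unfolding G_def by auto
    have "a \<inter> c \<in> D"
      using \<open>Int_stable D\<close> \<open>a \<in> A\<close> \<open>c \<in> C\<close> \<open>A \<subseteq> D\<close> \<open>C \<subseteq> D\<close> by (auto dest: Int_stableD)
    have "prob (a \<inter> g) = prob (b \<inter> (a \<inter> c))"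
      unfolding g by (simp add: Int_ac)
    also have "\<dots> = prob b * (prob a * prob c)"
      using indep_setD[OF BD \<open>b \<in> B\<close> \<open>a \<inter> c \<in> D\<close>] indep_setD[OF AC \<open>a \<in> A\<close> \<open>c \<in> C\<close>] by simp
    also have "\<dots> = prob a * prob g"
      using indep_setD[OF BD \<open>b \<in> B\<close>] \<open>c \<in> C\<close> \<open>C \<subseteq> D\<close> unfolding g by auto
    finally show "prob (a \<inter> g) = prob a * prob g" .
  qed
  moreover have "Int_stable G"
  proof (rule Int_stableI)
    fix g g' assume "g \<in> G" "g' \<in> G"
    then obtain b c b' c' where "g \<inter> g' = (b \<inter> b') \<inter> (c \<inter> c')" "b \<in> B" "b' \<in> B" "c \<in> C" "c' \<in> C"
      unfolding G_def by blast
    with \<open>Int_stable B\<close> \<open>Int_stable C\<close> show "g \<inter> g' \<in> G"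
      unfolding G_def by (blast dest: Int_stableD)
  qed
  ultimately have "indep_set (sigma_sets (space M) A) (sigma_sets (space M) G)"
    by (rule indep_set_sigma_sets[OF _ \<open>Int_stable A\<close>])
  moreover have "sigma_sets (space M) (B \<union> C) \<subseteq> sigma_sets (space M) G"
  proof (rule sigma_sets_mono')
    have "B \<union> C \<subseteq> Pow (space M)"
      using B_events D_events \<open>C \<subseteq> D\<close> sets.space_closed by blast
    moreover have "b \<inter> c \<in> G" if "b \<in> B" "c \<in> C" for b c
      using that unfolding G_def by blast
    ultimately show "B \<union> C \<subseteq> G"
      using \<open>space M \<in> B\<close> \<open>space M \<in> C\<close> by (metis Int_absorb1 Int_absorb2 PowD Un_iff subsetD subsetI)
  qed
  moreover have "A \<subseteq> sigma_sets (space M) A"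
    by (auto intro: sigma_sets.Basic)
  ultimately show ?thesis
    by (metis indep_set_mono)
qed

lemma (in prob_space) indep_set_component_sigma_Un:
  assumes X: "indep_vars M' X UNIV"
    and V: "indep_set (sets (vimage_algebra (space M) V N))
              (sets (vimage_algebra (space M) (\<lambda>\<omega> i. X i \<omega>) (PiM UNIV M')))"
    and "i \<notin> K"
  shows "indep_set (sets (vimage_algebra (space M) (X i) (M' i)))
           (sigma_sets (space M) (sets (vimage_algebra (space M) V N)
              \<union> sets (vimage_algebra (space M) (\<lambda>\<omega>. restrict (\<lambda>j. X j \<omega>) K) (PiM K M'))))"
proof -
  have X_space: "(\<lambda>\<omega> i. X i \<omega>) \<in> space M \<rightarrow> space (PiM UNIV M')"
    using X by (auto simp: indep_vars_def space_PiM dest: measurable_space)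
  have "sets (vimage_algebra (space M) (X i) (M' i))
      \<subseteq> sets (vimage_algebra (space M) (\<lambda>\<omega> i. X i \<omega>) (PiM UNIV M'))"
    using sets_vimage_algebra_comp_subset[OF X_space, of "\<lambda>f. f i" "M' i"]
    by (simp add: measurable_component_singleton)
  moreover have "sets (vimage_algebra (space M) (\<lambda>\<omega>. restrict (\<lambda>j. X j \<omega>) K) (PiM K M'))
      \<subseteq> sets (vimage_algebra (space M) (\<lambda>\<omega> i. X i \<omega>) (PiM UNIV M'))"
    using sets_vimage_algebra_comp_subset[OF X_space, of "\<lambda>f. restrict f K" "PiM K M'"]
    by (simp add: measurable_restrict_subset)
  ultimately show ?thesis
    using indep_set_sigma_Un[OF V indep_set_component_restrict[OF X _ _ \<open>i \<notin> K\<close>]]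
    by (simp add: sets.Int_stable sets_vimage_algebra_space)
qed

lemma borel_measurable_lti_response:
  assumes "\<And>j. j \<le> k \<Longrightarrow> x j \<in> borel_measurable N"
  shows "(\<lambda>\<omega>. lti_response h (\<lambda>j. x j \<omega>) k) \<in> borel_measurable N"
  unfolding lti_response_def using assms by (intro borel_measurable_sum) simp

lemma borel_measurable_lti_response_strictly_causal:
  assumes "h 0 = 0" "\<And>j. j < k \<Longrightarrow> x j \<in> borel_measurable N"
  shows "(\<lambda>\<omega>. lti_response h (\<lambda>j. x j \<omega>) k) \<in> borel_measurable N"
  unfolding lti_response_def
proof (rule borel_measurable_sum)
  fix i assume "i \<in> {..k}"
  then show "(\<lambda>\<omega>. h i * x (k - i) \<omega>) \<in> borel_measurable N"
    using assms by (cases "i = 0") auto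
qed

lemma borel_measurable_receiver_output:
  assumes "\<And>j. j \<le> k \<Longrightarrow> tau j \<in> measurable N (count_space UNIV)"
    and "\<And>j. j \<le> k \<Longrightarrow> u j \<in> borel_measurable N"
  shows "(\<lambda>\<omega>. receiver_output taubar alpha (\<lambda>j. tau j \<omega>) (\<lambda>j. u j \<omega>) k) \<in> borel_measurable N"
  unfolding receiver_output_def
proof (rule borel_measurable_sum)
  fix i
  have "(\<lambda>\<omega>. if tau (k - i) \<omega> = i then 1 else 0 :: real) \<in> borel_measurable N"
    using measurable_compose[OF assms(1) borel_measurable_count_space, of "k - i"] by simp
  then show "(\<lambda>\<omega>. if i \<le> k then alpha i * (if tau (k - i) \<omega> = i then 1 else 0) * u (k - i) \<omega> else 0)
      \<in> borel_measurable N"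
    using assms(2)[of "k - i"] by simp
qed

lemma closed_loop_input_measurable:
  assumes "hP 0 = 0"
    and v: "\<And>j. j < n \<Longrightarrow> v j \<in> borel_measurable N"
    and tau: "\<And>j. j < n \<Longrightarrow> tau j \<in> measurable N (count_space UNIV)"
    and receiver: "\<forall>\<omega>\<in>space N. \<forall>k. ud k \<omega> = receiver_output taubar alpha (\<lambda>j. tau j \<omega>) (\<lambda>j. u j \<omega>) k"
    and plant_eq: "\<forall>\<omega>\<in>space N. \<forall>k. y k \<omega> = lti_response hP (\<lambda>j. v j \<omega> + ud j \<omega>) k"
    and ctrl_eq: "\<forall>\<omega>\<in>space N. \<forall>k. u k \<omega> = lti_response hK (\<lambda>j. y j \<omega>) k"
    and "k \<le> n"
  shows "u k \<in> borel_measurable N"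
  using \<open>k \<le> n\<close>
proof (induction k rule: less_induct)
  case (less k)
  have ud: "ud l \<in> borel_measurable N" if "l < k" for l
    using borel_measurable_receiver_output[of l tau N u taubar alpha] tau less that
    by (simp add: receiver cong: measurable_cong)
  have y: "y m \<in> borel_measurable N" if "m \<le> k" for m
    using borel_measurable_lti_response_strictly_causal[of hP m "\<lambda>j \<omega>. v j \<omega> + ud j \<omega>"] \<open>hP 0 = 0\<close>
      v ud less.prems that
    by (simp add: plant_eq cong: measurable_cong)
  show ?case
    using borel_measurable_lti_response[of k y] y by (simp add: ctrl_eq cong: measurable_cong)
qed

theorem lemma3p3:
  fixes M :: "'a measure" and taubar :: nat and p :: "nat \<Rightarrow> real" and alpha :: "nat \<Rightarrow> real"
    and hP hK :: "nat \<Rightarrow> real" and tau :: "nat \<Rightarrow> 'a \<Rightarrow> nat"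
    and v u y ud :: "nat \<Rightarrow> 'a \<Rightarrow> real" and n1 n2 :: nat
  assumes "prob_space M" and "taubar \<ge> 1"
    and plant: "strictly_proper_tf hP" and controller: "proper_tf hK"
    and A1_indep: "prob_space.indep_vars M (\<lambda>_. count_space UNIV) tau UNIV"
    and A1_range: "\<forall>k. \<forall>\<omega>\<in>space M. tau k \<omega> \<le> taubar"
    and A1_dist: "\<forall>k. \<forall>i\<le>taubar. measure M {\<omega>\<in>space M. tau k \<omega> = i} = p i"
    and A1_sum: "(\<Sum>i\<le>taubar. p i) = 1"
    and A2: "prob_space.indep_set M
           (sets (vimage_algebra (space M) (\<lambda>\<omega> k. v k \<omega>) (PiM UNIV (\<lambda>_. borel))))
           (sets (vimage_algebra (space M) (\<lambda>\<omega> k. tau k \<omega>) (PiM UNIV (\<lambda>_. count_space UNIV))))"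
    and receiver: "\<forall>\<omega>\<in>space M. \<forall>k. ud k \<omega> = receiver_output taubar alpha (\<lambda>j. tau j \<omega>) (\<lambda>j. u j \<omega>) k"
    and plant_eq: "\<forall>\<omega>\<in>space M. \<forall>k. y k \<omega> = lti_response hP (\<lambda>j. v j \<omega> + ud j \<omega>) k"
    and ctrl_eq: "\<forall>\<omega>\<in>space M. \<forall>k. u k \<omega> = lti_response hK (\<lambda>j. y j \<omega>) k"
    and "n2 \<le> n1"
  shows "prob_space.indep_set M
           (sets (vimage_algebra (space M) (tau n1) (count_space UNIV)))
           (sets (vimage_algebra (space M) (\<lambda>\<omega>. (u n1 \<omega>, u n2 \<omega>)) borel))"
proof -
  interpret P: prob_space M by fact
  let ?past = "\<lambda>\<omega>. restrict (\<lambda>j. tau j \<omega>) {..<n1}"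
  let ?Sv = "sets (vimage_algebra (space M) (\<lambda>\<omega> k. v k \<omega>) (PiM UNIV (\<lambda>_. borel :: real measure)))"
  let ?Sp = "sets (vimage_algebra (space M) ?past (PiM {..<n1} (\<lambda>_. count_space (UNIV :: nat set))))"
  have indep: "P.indep_set (sets (vimage_algebra (space M) (tau n1) (count_space UNIV)))
      (sigma_sets (space M) (?Sv \<union> ?Sp))"
    by (rule P.indep_set_component_sigma_Un[OF A1_indep A2]) simp
  define N where "N = sigma (space M) (?Sv \<union> ?Sp)"
  have "?Sv \<union> ?Sp \<subseteq> Pow (space M)"
    by (metis sets.space_closed space_vimage_algebra Un_least)
  then have space_N: "space N = space M" and sets_N: "sets N = sigma_sets (space M) (?Sv \<union> ?Sp)"
    unfolding N_def by simp_all
  have hP0: "hP 0 = 0"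
    using plant by (simp add: strictly_proper_tf_def)
  have v_meas: "v k \<in> borel_measurable N" for k
    using measurable_sigma_component[of "\<lambda>\<omega> k. v k \<omega>" "space M" UNIV "\<lambda>_. borel" "?Sv \<union> ?Sp" k]
      \<open>?Sv \<union> ?Sp \<subseteq> _\<close>
    unfolding N_def by (simp add: space_PiM)
  have tau_meas: "tau j \<in> measurable N (count_space UNIV)" if "j < n1" for j
    using measurable_sigma_component[of ?past "space M" "{..<n1}" "\<lambda>_. count_space UNIV" "?Sv \<union> ?Sp" j]
      \<open>?Sv \<union> ?Sp \<subseteq> _\<close> that
    unfolding N_def by (simp add: space_PiM cong: measurable_cong)
  have "u k \<in> borel_measurable N" if "k \<le> n1" for k
    by (rule closed_loop_input_measurable[OF hP0 v_meas tau_meas receiver[folded space_N]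
          plant_eq[folded space_N] ctrl_eq[folded space_N] that])
  then have "(\<lambda>\<omega>. (u n1 \<omega>, u n2 \<omega>)) \<in> borel_measurable N"
    using \<open>n2 \<le> n1\<close> by (simp flip: borel_prod)
  then have "sets (vimage_algebra (space M) (\<lambda>\<omega>. (u n1 \<omega>, u n2 \<omega>)) borel) \<subseteq> sigma_sets (space M) (?Sv \<union> ?Sp)"
    unfolding sets_N[symmetric] by (rule sets_image_in_sets[OF space_N])
  with indep show ?thesis
    by (rule P.indep_set_mono[OF _ order_refl])
qed

end
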